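(* Let $G$ be a graph and $(v_1,\dots,v_k)$ a list of (not necessarily distinct) vertices of $G$. Let $G_{m_1,\dots,m_k}$ be the graph obtained by attaching, for each $i$, one endvertex of a new $m_i$-vertex path to $v_i$ by an edge (so $G_{m_1,\dots,m_k}$ has $m_1+\dots+m_k$ more vertices than $G$), and let $R_{m_1,\dots,m_k}(z)$ be its reciprocal polynomial. Then there are integer polynomials $P_{(\epsilon_1,\dots,\epsilon_k)}(z)$, $\epsilon_i\in\{0,1\}$, depending on $G$ and $(v_1,\dots,v_k)$ but not on $m_1,\dots,m_k$, such that whenever all $m_i\ge2$, $$(y^2-1)^kR_{m_1,\dots,m_k}(z)=\sum_{\epsilon_1,\dots,\epsilon_k\in\{0,1\}}y^{2\sum_i\epsilon_im_i}P_{(\epsilon_1,\dots,\epsilon_k)}(z).$$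
   Context: Graphs are finite simple graphs; $\chi_G$ is the characteristic polynomial of the adjacency matrix of an $n$-vertex graph $G$. The reciprocal polynomial is $R_G(z)=z^n\chi_G(z+1/z)$ if $G$ is nonbipartite and $R_G(z)=z^{n/2}\chi_G(\sqrt z+1/\sqrt z)$ if $G$ is bipartite. Here $y=\sqrt z$ if the graphs are bipartite, and $y=z$ otherwise. *)

theory Defs
  imports "HOL-Computational_Algebra.Polynomial" "Jordan_Normal_Form.Char_Poly"
begin

definition simple_graph :: "nat \<Rightarrow> (nat \<Rightarrow> nat \<Rightarrow> bool) \<Rightarrow> bool" where
  "simple_graph n E \<longleftrightarrow> (\<forall>a b. E a b \<longrightarrow> a < n \<and> b < n \<and> a \<noteq> b \<and> E b a)"

definition adj_matrix :: "nat \<Rightarrow> (nat \<Rightarrow> nat \<Rightarrow> bool) \<Rightarrow> int mat" where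
  "adj_matrix n E = mat n n (\<lambda>(i, j). if E i j then 1 else 0)"

definition graph_char_poly :: "nat \<Rightarrow> (nat \<Rightarrow> nat \<Rightarrow> bool) \<Rightarrow> int poly" where
  "graph_char_poly n E = char_poly (adj_matrix n E)"

definition bipartite :: "nat \<Rightarrow> (nat \<Rightarrow> nat \<Rightarrow> bool) \<Rightarrow> bool" where
  "bipartite n E \<longleftrightarrow> (\<exists>c :: nat \<Rightarrow> bool. \<forall>a<n. \<forall>b<n. E a b \<longrightarrow> c a \<noteq> c b)"

text \<open>Writing chi_G(x) = sum_j c_j x^j:
  nonbipartite: z^n chi(z + 1/z) = sum_j c_j z^(n-j) (z^2+1)^j;
  bipartite:    z^(n/2) chi(sqrt z + 1/sqrt z) = sum_j c_j z^((n-j)/2) (z+1)^j,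
  where only j with n-j even occur (c_j = 0 otherwise for bipartite graphs).\<close>
definition reciprocal_poly :: "nat \<Rightarrow> (nat \<Rightarrow> nat \<Rightarrow> bool) \<Rightarrow> int poly" where
  "reciprocal_poly n E =
     (let c = coeff (graph_char_poly n E) in
      if bipartite n E
      then (\<Sum>j\<le>n. if even (n - j) then [:c j:] * ([:0,1:] ^ ((n - j) div 2) * [:1,1:] ^ j) else 0)
      else (\<Sum>j\<le>n. [:c j:] * ([:0,1:] ^ (n - j) * [:1,0,1:] ^ j)))"

text \<open>Attaching paths: for each i < length vs, a new path with ms!i vertices
  occupying the vertices off i, ..., off i + ms!i - 1 (off i = n + ms!0 + ... + ms!(i-1)),
  whose first vertex off i is joined to vs!i.\<close>
definition path_offset :: "nat \<Rightarrow> nat list \<Rightarrow> nat \<Rightarrow> nat" where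
  "path_offset n ms i = n + sum_list (take i ms)"

definition attach_dir :: "nat \<Rightarrow> nat list \<Rightarrow> nat list \<Rightarrow> nat \<Rightarrow> nat \<Rightarrow> bool" where
  "attach_dir n vs ms a b \<longleftrightarrow>
     (\<exists>i < length vs. 0 < ms ! i \<and>
        ((a = vs ! i \<and> b = path_offset n ms i) \<or>
         (path_offset n ms i \<le> a \<and> b = a + 1 \<and> b < path_offset n ms i + ms ! i)))"

definition attach_paths :: "nat \<Rightarrow> (nat \<Rightarrow> nat \<Rightarrow> bool) \<Rightarrow> nat list \<Rightarrow> nat list \<Rightarrow> nat \<Rightarrow> nat \<Rightarrow> bool" where
  "attach_paths n E vs ms a b \<longleftrightarrow> E a b \<or> attach_dir n vs ms a b \<or> attach_dir n vs ms b a"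

end

theory Submission
  imports Defs
begin

(* The last vertex of an attached path is pendant, so expanding det(xI - A) along it gives
   chi_{m+2} = x chi_{m+1} - chi_m in the length m of that path.  The reciprocal substitution
   x = y + 1/y turns this into R_{m+2} = (y^2 + 1) R_{m+1} - y^2 R_m, a recurrence with
   characteristic roots 1 and y^2, whence (y^2 - 1) R_m = (y^2 - y^(2m)) R_0 + (y^(2m) - 1) R_1.
   Doing this in each of the k coordinates gives the expansion; attaching paths does not change
   bipartiteness, so the meaning of y is the same for all path lengths.  The interpolation is
   valid for every m >= 0. *)

section \<open>Characteristic polynomials and pendant vertices\<close>

lemma mat_delete_Suc_mat_delete:
  "mat_delete (mat_delete A (Suc p) p) p p = mat_delete (mat_delete A (Suc p) (Suc p)) p p"
  by (rule eq_matI) (auto simp: mat_delete_def)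

lemma det_expand_pendant:
  fixes C :: "'a::comm_ring_1 mat"
  assumes C: "C \<in> carrier_mat (Suc (Suc d)) (Suc (Suc d))"
    and u: "u = Suc p" "u < Suc (Suc d)"
    and row: "\<And>j. j < Suc (Suc d) \<Longrightarrow> j \<noteq> u \<Longrightarrow> j \<noteq> p \<Longrightarrow> C $$ (u, j) = 0"
    and col: "\<And>r. r < Suc (Suc d) \<Longrightarrow> r \<noteq> u \<Longrightarrow> r \<noteq> p \<Longrightarrow> C $$ (r, u) = 0"
  shows "det C = C $$ (u, u) * det (mat_delete C u u)
           - C $$ (u, p) * C $$ (p, u) * det (mat_delete (mat_delete C u u) p p)"
proof -
  let ?M = "mat_delete C u p"
  have M: "?M \<in> carrier_mat (Suc d) (Suc d)" using mat_delete_carrier[OF C] by simp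
  have "det C = (\<Sum>j<Suc (Suc d). C $$ (u, j) * cofactor C u j)"
    by (rule laplace_expansion_row[OF C u(2)])
  also have "\<dots> = (\<Sum>j\<in>{p, u}. C $$ (u, j) * cofactor C u j)"
    by (rule sum.mono_neutral_right) (use u row in auto)
  finally have row_exp: "det C = C $$ (u, p) * cofactor C u p + C $$ (u, u) * det (mat_delete C u u)"
    using u by (simp add: cofactor_def)
  \<comment> \<open>After deleting column p, the former column u sits at index p and has a single entry.\<close>
  have "det ?M = (\<Sum>r<Suc d. ?M $$ (r, p) * cofactor ?M r p)"
    by (rule laplace_expansion_column[OF M]) (use u in auto)
  also have "\<dots> = (\<Sum>r\<in>{p}. ?M $$ (r, p) * cofactor ?M r p)"
  proof (rule sum.mono_neutral_right)
    show "\<forall>r\<in>{..<Suc d} - {p}. ?M $$ (r, p) * cofactor ?M r p = 0"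
    proof
      fix r assume r: "r \<in> {..<Suc d} - {p}"
      have "?M $$ (r, p) = C $$ (if r < u then r else Suc r, u)"
        unfolding mat_delete_def using C r u by auto
      also have "\<dots> = 0" using r u by (intro col) auto
      finally show "?M $$ (r, p) * cofactor ?M r p = 0" by simp
    qed
  qed (use u in auto)
  finally have "det ?M = ?M $$ (p, p) * cofactor ?M p p" by simp
  moreover have "?M $$ (p, p) = C $$ (p, u)"
    unfolding mat_delete_def using C u by auto
  ultimately have col_exp: "det ?M = C $$ (p, u) * det (mat_delete ?M p p)"
    by (simp add: cofactor_def flip: mult_2)
  have "(-1::'a) ^ (u + p) = -1" using u by (simp add: power_add)
  then show ?thesis
    using row_exp col_exp unfolding cofactor_def u(1) mat_delete_Suc_mat_delete
    by (simp add: algebra_simps)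
qed

definition delete_vertex :: "nat \<Rightarrow> (nat \<Rightarrow> nat \<Rightarrow> bool) \<Rightarrow> nat \<Rightarrow> nat \<Rightarrow> bool" where
  "delete_vertex u H a b \<longleftrightarrow> H (insert_index u a) (insert_index u b)"

lemma char_poly_matrix_adj_matrix_carrier:
  "char_poly_matrix (adj_matrix N H) \<in> carrier_mat N N"
  unfolding adj_matrix_def by simp

lemma char_poly_matrix_adj_matrix_entry:
  assumes "i < N" "j < N"
  shows "char_poly_matrix (adj_matrix N H) $$ (i, j) =
     (if i = j then [:0, 1:] else 0) + (if H i j then [:-1:] else 0)"
  using assms unfolding char_poly_matrix_def adj_matrix_def by auto

lemma mat_delete_char_poly_matrix_adj_matrix:
  "mat_delete (char_poly_matrix (adj_matrix (Suc N) H)) u u =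
     char_poly_matrix (adj_matrix N (delete_vertex u H))"
proof (rule eq_matI)
  fix i j
  assume "i < dim_row (char_poly_matrix (adj_matrix N (delete_vertex u H)))"
    and "j < dim_col (char_poly_matrix (adj_matrix N (delete_vertex u H)))"
  then have ij: "i < N" "j < N"
    using char_poly_matrix_adj_matrix_carrier[of N "delete_vertex u H"] by auto
  then have "insert_index u i < Suc N" "insert_index u j < Suc N"
    unfolding insert_index_def by auto
  moreover have "insert_index u i = insert_index u j \<longleftrightarrow> i = j"
    unfolding insert_index_def by auto
  ultimately show "mat_delete (char_poly_matrix (adj_matrix (Suc N) H)) u u $$ (i, j) =
      char_poly_matrix (adj_matrix N (delete_vertex u H)) $$ (i, j)"
    using ij char_poly_matrix_adj_matrix_carrier[of "Suc N" H]
    by (simp add: mat_delete_def char_poly_matrix_adj_matrix_entry delete_vertex_def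
        flip: insert_index_def)
qed (simp_all add: char_poly_matrix_def adj_matrix_def)

lemma graph_char_poly_pendant:
  assumes u: "u = Suc p" "u < Suc (Suc d)"
    and row: "\<And>j. j < Suc (Suc d) \<Longrightarrow> H u j \<longleftrightarrow> j = p"
    and col: "\<And>r. r < Suc (Suc d) \<Longrightarrow> H r u \<longleftrightarrow> r = p"
  shows "graph_char_poly (Suc (Suc d)) H =
     [:0, 1:] * graph_char_poly (Suc d) (delete_vertex u H)
     - graph_char_poly d (delete_vertex p (delete_vertex u H))"
proof -
  let ?C = "char_poly_matrix (adj_matrix (Suc (Suc d)) H)"
  have "det ?C = ?C $$ (u, u) * det (mat_delete ?C u u)
           - ?C $$ (u, p) * ?C $$ (p, u) * det (mat_delete (mat_delete ?C u u) p p)"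
    by (rule det_expand_pendant[OF char_poly_matrix_adj_matrix_carrier u])
       (use u row col in \<open>auto simp: char_poly_matrix_adj_matrix_entry\<close>)
  moreover have "?C $$ (u, u) = [:0, 1:]" "?C $$ (u, p) = [:-1:]" "?C $$ (p, u) = [:-1:]"
    using u row[of u] row[of p] col[of p] by (simp_all add: char_poly_matrix_adj_matrix_entry)
  ultimately show ?thesis
    unfolding graph_char_poly_def char_poly_def u(1)
    by (simp add: mat_delete_char_poly_matrix_adj_matrix)
qed

lemma degree_graph_char_poly: "degree (graph_char_poly N H) = N"
  unfolding graph_char_poly_def adj_matrix_def
  using degree_monic_char_poly[of "mat N N (\<lambda>(i, j). if H i j then 1 else 0 :: int)" N] by simp

lemma bipartite_delete_pendant:
  assumes u: "u < Suc d" and qu: "q \<noteq> u"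
    and row: "\<And>b. H u b \<longleftrightarrow> b = q" and col: "\<And>b. H b u \<longleftrightarrow> b = q"
  shows "bipartite (Suc d) H \<longleftrightarrow> bipartite d (delete_vertex u H)"
proof
  assume "bipartite (Suc d) H"
  then obtain c :: "nat \<Rightarrow> bool" where c: "\<forall>a<Suc d. \<forall>b<Suc d. H a b \<longrightarrow> c a \<noteq> c b"
    unfolding bipartite_def by blast
  have "insert_index u a < Suc d" if "a < d" for a
    using that unfolding insert_index_def by simp
  then have "c (insert_index u a) \<noteq> c (insert_index u b)"
    if "a < d" "b < d" "delete_vertex u H a b" for a b
    using c that unfolding delete_vertex_def by simp
  then show "bipartite d (delete_vertex u H)"
    unfolding bipartite_def by (intro exI[of _ "\<lambda>x. c (insert_index u x)"]) simp
next
  assume "bipartite d (delete_vertex u H)"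
  then obtain c :: "nat \<Rightarrow> bool" where c: "\<forall>a<d. \<forall>b<d. delete_vertex u H a b \<longrightarrow> c a \<noteq> c b"
    unfolding bipartite_def by blast
  define c' where "c' x = (if x = u then \<not> c (delete_index u q) else c (delete_index u x))" for x
  have delete_index_lt: "delete_index u x < d" if "x \<noteq> u" "x < Suc d" for x
    using that u unfolding delete_index_def by auto
  have "c' a \<noteq> c' b" if a: "a < Suc d" and b: "b < Suc d" and ab: "H a b" for a b
  proof (cases "a = u \<or> b = u")
    case True
    then have "a = u \<and> b = q \<or> b = u \<and> a = q" using row col ab by blast
    then show ?thesis using qu unfolding c'_def by auto
  next
    case False
    then have "delete_vertex u H (delete_index u a) (delete_index u b)"
      using ab by (simp add: delete_vertex_def insert_delete_index)
    then show ?thesis using c delete_index_lt a b False unfolding c'_def by simp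
  qed
  then show "bipartite (Suc d) H" unfolding bipartite_def by blast
qed

section \<open>The reciprocal transform\<close>

(* With h d = z^d and b = z^2 + 1 this is z^N p(z + 1/z); with h d = z^(d/2) for even d, 0 for
   odd d, and b = z + 1 it is z^(N/2) p(sqrt z + 1/sqrt z). *)
definition recip_transform :: "(nat \<Rightarrow> int poly) \<Rightarrow> int poly \<Rightarrow> nat \<Rightarrow> int poly \<Rightarrow> int poly" where
  "recip_transform h b N p = (\<Sum>j\<le>N. [:coeff p j:] * (h (N - j) * b ^ j))"

lemma recip_transform_pCons_0:
  "recip_transform h b (Suc N) (pCons 0 p) = b * recip_transform h b N p"
  unfolding recip_transform_def sum.atMost_Suc_shift by (simp add: sum_distrib_left algebra_simps)

lemma recip_transform_diff:
  "recip_transform h b N (p - q) = recip_transform h b N p - recip_transform h b N q"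
  unfolding recip_transform_def sum_subtractf[symmetric]
  by (rule sum.cong) (simp_all add: algebra_simps smult_diff_left)

lemma recip_transform_Suc_Suc:
  assumes h: "\<And>d. h (Suc (Suc d)) = w * h d" and deg: "degree p \<le> N"
  shows "recip_transform h b (Suc (Suc N)) p = w * recip_transform h b N p"
proof -
  have "recip_transform h b (Suc (Suc N)) p = (\<Sum>j\<le>N. [:coeff p j:] * (h (Suc (Suc N) - j) * b ^ j))"
    unfolding recip_transform_def using deg by (simp add: coeff_eq_0)
  also have "\<dots> = (\<Sum>j\<le>N. w * ([:coeff p j:] * (h (N - j) * b ^ j)))"
    by (rule sum.cong) (auto simp: Suc_diff_le h)
  finally show ?thesis unfolding recip_transform_def by (simp add: sum_distrib_left)
qed

(* y^2 as a polynomial in z: y = sqrt z for bipartite graphs and y = z otherwise. *)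
definition recip_square :: "bool \<Rightarrow> int poly" where
  "recip_square bip = (if bip then [:0, 1:] else [:0, 0, 1:])"

definition recip_weight :: "bool \<Rightarrow> nat \<Rightarrow> int poly" where
  "recip_weight bip d =
     (if bip then (if even d then [:0, 1:] ^ (d div 2) else 0) else [:0, 1:] ^ d)"

lemma recip_weight_Suc_Suc: "recip_weight bip (Suc (Suc d)) = recip_square bip * recip_weight bip d"
  unfolding recip_weight_def recip_square_def by (simp add: power2_eq_square algebra_simps)

lemma recip_square_plus_1: "recip_square bip + 1 = (if bip then [:1, 1:] else [:1, 0, 1:])"
  unfolding recip_square_def by (simp add: one_pCons)

lemma reciprocal_poly_eq_recip_transform:
  "reciprocal_poly N H = recip_transform (recip_weight (bipartite N H))
     (recip_square (bipartite N H) + 1) N (graph_char_poly N H)"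
  unfolding reciprocal_poly_def recip_transform_def recip_weight_def recip_square_plus_1 Let_def
  by (auto intro!: sum.cong)

section \<open>Interpolating solutions of the recurrence\<close>

lemma linear_recurrence_interpolation:
  fixes G :: "nat \<Rightarrow> 'a::comm_ring_1"
  assumes rec: "\<And>m. G (Suc (Suc m)) = (w + 1) * G (Suc m) - w * G m"
  shows "(w - 1) * G m = (w - w ^ m) * G 0 + (w ^ m - 1) * G 1"
proof (induction m rule: induct_nat_012)
  case (ge2 m)
  have "(w - 1) * G (Suc (Suc m)) = (w + 1) * ((w - 1) * G (Suc m)) - w * ((w - 1) * G m)"
    unfolding rec by (simp add: algebra_simps)
  then show ?case unfolding ge2 by (simp add: algebra_simps)
qed (simp_all add: algebra_simps)

definition binary_lists :: "nat \<Rightarrow> nat list set" where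
  "binary_lists k = {eps. length eps = k \<and> set eps \<subseteq> {0, 1}}"

lemma finite_binary_lists: "finite (binary_lists k)"
  using finite_lists_length_eq[of "{0, 1 :: nat}" k] unfolding binary_lists_def by (simp add: conj_commute)

lemma binary_lists_Suc: "binary_lists (Suc k) = Cons 0 ` binary_lists k \<union> Cons 1 ` binary_lists k"
  unfolding binary_lists_def by (auto simp: length_Suc_conv)

lemma sum_binary_lists_Suc:
  fixes w :: "'a::comm_ring_1"
  shows "(\<Sum>eps\<in>binary_lists (Suc k). w ^ (\<Sum>i<Suc k. eps ! i * (m # l) ! i) * P eps) =
     (\<Sum>eps\<in>binary_lists k. w ^ (\<Sum>i<k. eps ! i * l ! i) * P (0 # eps))
     + w ^ m * (\<Sum>eps\<in>binary_lists k. w ^ (\<Sum>i<k. eps ! i * l ! i) * P (1 # eps))"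
proof -
  have exponent: "(\<Sum>i<Suc k. (e # eps) ! i * (m # l) ! i) = e * m + (\<Sum>i<k. eps ! i * l ! i)"
    for e eps
    by (simp only: sum.lessThan_Suc_shift) simp
  have "Cons 0 ` binary_lists k \<inter> Cons 1 ` binary_lists k = {}" by auto
  then have "(\<Sum>eps\<in>binary_lists (Suc k). w ^ (\<Sum>i<Suc k. eps ! i * (m # l) ! i) * P eps) =
      (\<Sum>eps\<in>Cons 0 ` binary_lists k. w ^ (\<Sum>i<Suc k. eps ! i * (m # l) ! i) * P eps)
      + (\<Sum>eps\<in>Cons 1 ` binary_lists k. w ^ (\<Sum>i<Suc k. eps ! i * (m # l) ! i) * P eps)"
    unfolding binary_lists_Suc by (intro sum.union_disjoint) (simp_all add: finite_binary_lists)
  also have "\<dots> = (\<Sum>eps\<in>binary_lists k. w ^ (0 * m + (\<Sum>i<k. eps ! i * l ! i)) * P (0 # eps))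
      + (\<Sum>eps\<in>binary_lists k. w ^ (1 * m + (\<Sum>i<k. eps ! i * l ! i)) * P (1 # eps))"
    by (simp add: sum.reindex exponent del: sum.lessThan_Suc)
  finally show ?thesis
    by (simp only: power_add sum_distrib_left mult.assoc) simp
qed

lemma coordinatewise_interpolation_expansion:
  fixes w :: "'a::comm_ring_1" and F :: "nat list \<Rightarrow> 'a"
  assumes "\<And>ms i. length ms = k \<Longrightarrow> i < k \<Longrightarrow>
     (w - 1) * F ms = (w - w ^ (ms ! i)) * F (ms[i := 0]) + (w ^ (ms ! i) - 1) * F (ms[i := 1])"
  shows "\<exists>P. \<forall>ms. length ms = k \<longrightarrow>
     (w - 1) ^ k * F ms = (\<Sum>eps\<in>binary_lists k. w ^ (\<Sum>i<k. eps ! i * ms ! i) * P eps)"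
  using assms
proof (induction k arbitrary: F)
  case 0
  have "binary_lists 0 = {[]}" unfolding binary_lists_def by auto
  then show ?case by (intro exI[of _ "\<lambda>_. F []"]) auto
next
  case (Suc k)
  have expansion: "\<exists>P. \<forall>ms. length ms = k \<longrightarrow>
     (w - 1) ^ k * F (e # ms) = (\<Sum>eps\<in>binary_lists k. w ^ (\<Sum>i<k. eps ! i * ms ! i) * P eps)" for e
    by (rule Suc.IH) (use Suc.prems[of "e # _" "Suc _"] in auto)
  obtain P0 where
    P0: "\<And>ms. length ms = k \<Longrightarrow>
      (w - 1) ^ k * F (0 # ms) = (\<Sum>eps\<in>binary_lists k. w ^ (\<Sum>i<k. eps ! i * ms ! i) * P0 eps)"
    using expansion[of 0] by blast
  obtain P1 where
    P1: "\<And>ms. length ms = k \<Longrightarrow>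
      (w - 1) ^ k * F (1 # ms) = (\<Sum>eps\<in>binary_lists k. w ^ (\<Sum>i<k. eps ! i * ms ! i) * P1 eps)"
    using expansion[of 1] by blast
  define P where "P eps = (case eps of [] \<Rightarrow> 0 | e # eps' \<Rightarrow>
       (if e = 0 then w * P0 eps' - P1 eps' else P1 eps' - P0 eps'))" for eps
  show ?case
  proof (intro exI[of _ P] allI impI)
    fix ms :: "nat list" assume "length ms = Suc k"
    then obtain m l where ms: "ms = m # l" and l: "length l = k" by (cases ms) auto
    define A where "A eps = w ^ (\<Sum>i<k. eps ! i * l ! i)" for eps
    have "(w - 1) ^ Suc k * F ms = (w - 1) ^ k * ((w - 1) * F (m # l))"
      using ms by (simp add: algebra_simps)
    also have "(w - 1) * F (m # l) = (w - w ^ m) * F (0 # l) + (w ^ m - 1) * F (1 # l)"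
      using Suc.prems[of "m # l" 0] l by simp
    also have "(w - 1) ^ k * ((w - w ^ m) * F (0 # l) + (w ^ m - 1) * F (1 # l))
       = (w - w ^ m) * ((w - 1) ^ k * F (0 # l)) + (w ^ m - 1) * ((w - 1) ^ k * F (1 # l))"
      by (simp add: algebra_simps)
    also have "\<dots> = (w - w ^ m) * (\<Sum>eps\<in>binary_lists k. A eps * P0 eps)
        + (w ^ m - 1) * (\<Sum>eps\<in>binary_lists k. A eps * P1 eps)"
      unfolding P0[OF l] P1[OF l] A_def ..
    also have "\<dots> = (\<Sum>eps\<in>binary_lists k. A eps * (w * P0 eps - P1 eps))
        + (\<Sum>eps\<in>binary_lists k. w ^ m * (A eps * (P1 eps - P0 eps)))"
      by (simp add: sum_distrib_left sum_subtractf algebra_simps flip: sum.distrib)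
    also have "\<dots> = (\<Sum>eps\<in>binary_lists k. A eps * P (0 # eps))
        + w ^ m * (\<Sum>eps\<in>binary_lists k. A eps * P (1 # eps))"
      by (simp add: P_def sum_distrib_left)
    also have "\<dots> = (\<Sum>eps\<in>binary_lists (Suc k). w ^ (\<Sum>i<Suc k. eps ! i * ms ! i) * P eps)"
      unfolding A_def ms by (rule sum_binary_lists_Suc[symmetric])
    finally show "(w - 1) ^ Suc k * F ms =
        (\<Sum>eps\<in>binary_lists (Suc k). w ^ (\<Sum>i<Suc k. eps ! i * ms ! i) * P eps)" .
  qed
qed

section \<open>Attached paths\<close>

lemma path_offset_mono: "j \<le> j' \<Longrightarrow> path_offset n ms j \<le> path_offset n ms j'"
  unfolding path_offset_def by (metis le_add_diff_inverse take_add sum_list_append le_add1 add_le_cancel_left)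

lemma path_offset_Suc: "j < length ms \<Longrightarrow> path_offset n ms (Suc j) = path_offset n ms j + ms ! j"
  unfolding path_offset_def by (simp add: take_Suc_conv_app_nth)

lemma path_offset_add_nth_le:
  "j < j' \<Longrightarrow> j < length ms \<Longrightarrow> path_offset n ms j + ms ! j \<le> path_offset n ms j'"
  using path_offset_mono[of "Suc j" j' n ms] path_offset_Suc[of j ms n] by simp

lemma le_path_offset: "n \<le> path_offset n ms j"
  unfolding path_offset_def by simp

definition path_arc :: "nat \<Rightarrow> nat \<Rightarrow> nat \<Rightarrow> nat \<Rightarrow> nat \<Rightarrow> bool" where
  "path_arc v s c a b \<longleftrightarrow> 0 < c \<and> ((a = v \<and> b = s) \<or> (s \<le> a \<and> b = a + 1 \<and> b < s + c))"

lemma attach_dir_iff_path_arc: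
  "attach_dir n vs ms a b \<longleftrightarrow> (\<exists>j < length vs. path_arc (vs ! j) (path_offset n ms j) (ms ! j) a b)"
  unfolding attach_dir_def path_arc_def ..

lemma path_arc_delete_below:
  "v < u \<Longrightarrow> s + c \<le> u \<Longrightarrow>
     path_arc v s c (insert_index u a) (insert_index u b) \<longleftrightarrow> path_arc v s c a b"
  unfolding path_arc_def insert_index_def by auto

lemma path_arc_delete_last:
  "v < u \<Longrightarrow> u = s + c \<Longrightarrow>
     path_arc v s (Suc c) (insert_index u a) (insert_index u b) \<longleftrightarrow> path_arc v s c a b"
  unfolding path_arc_def insert_index_def by auto

lemma path_arc_delete_above:
  "v < u \<Longrightarrow> u \<le> s \<Longrightarrow>
     path_arc v (Suc s) c (insert_index u a) (insert_index u b) \<longleftrightarrow> path_arc v s c a b"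
  unfolding path_arc_def insert_index_def by auto

lemma not_path_arc_outside:
  assumes "v < u" "s + c \<le> u \<or> u < s"
  shows "\<not> path_arc v s c u b" "\<not> path_arc v s c b u"
  using assms unfolding path_arc_def by auto

lemma path_arc_last:
  assumes "v < s" "u = s + m"
  shows "\<not> path_arc v s (Suc m) u b" "path_arc v s (Suc m) b u \<longleftrightarrow> b = (if m = 0 then v else u - 1)"
  using assms unfolding path_arc_def by auto

(* With ms ! i = 0, the graph for ms[i := x] has an i-th path of x vertices, the last of which,
   path_offset n ms i + x - 1, is pendant. *)
context
  fixes n :: nat and E :: "nat \<Rightarrow> nat \<Rightarrow> bool" and vs ms :: "nat list" and i :: nat
  assumes simple: "simple_graph n E" and vs_less: "\<forall>v\<in>set vs. v < n"
    and length_ms: "length ms = length vs" and i_less: "i < length vs" and ms_i: "ms ! i = 0"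
begin

lemma sum_list_update_zero: "sum_list (ms[i := x]) = sum_list ms + x"
  using length_ms i_less ms_i by (simp add: sum_list_update)

lemma path_offset_update_zero:
  "path_offset n (ms[i := x]) j = path_offset n ms j + (if i < j then x else 0)"
proof (cases "i < j")
  case True
  have "sum_list ((take j ms)[i := x]) = sum_list (take j ms) + x"
    using True length_ms i_less ms_i by (simp add: sum_list_update)
  then show ?thesis using True unfolding path_offset_def by (simp add: take_update_swap)
qed (simp add: path_offset_def)

lemma path_offset_le_order: "path_offset n ms i \<le> n + sum_list ms"
  using path_offset_mono[of i "length ms" n ms] length_ms i_less by (simp add: path_offset_def)

lemma path_arc_delete_end:
  fixes m :: nat
  assumes j: "j < length vs"
  defines "u \<equiv> path_offset n ms i + m"
  shows "path_arc (vs ! j) (path_offset n (ms[i := Suc m]) j) (ms[i := Suc m] ! j)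
           (insert_index u a) (insert_index u b)
     \<longleftrightarrow> path_arc (vs ! j) (path_offset n (ms[i := m]) j) (ms[i := m] ! j) a b"
proof -
  have "vs ! j < n" using vs_less j by simp
  then have v: "vs ! j < u" using le_path_offset[of n ms i] unfolding u_def by linarith
  consider "j < i" | "j = i" | "i < j" by arith
  then show ?thesis
  proof cases
    case 1
    then have "path_offset n ms j + ms ! j \<le> u"
      using path_offset_add_nth_le[of j i ms n] length_ms j unfolding u_def by simp
    then show ?thesis using path_arc_delete_below[OF v] 1 length_ms
      by (simp add: path_offset_update_zero)
  next
    case 2
    then show ?thesis using path_arc_delete_last[OF v] length_ms j
      by (simp add: path_offset_update_zero u_def)
  next
    case 3
    then show ?thesis using path_arc_delete_above[OF v, of "path_offset n ms j + m"]
        path_offset_mono[of i j n ms] length_ms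
      by (simp add: path_offset_update_zero u_def)
  qed
qed

lemma path_arc_end_vertex:
  fixes m :: nat
  assumes j: "j < length vs"
  defines "u \<equiv> path_offset n ms i + m"
  shows "\<not> path_arc (vs ! j) (path_offset n (ms[i := Suc m]) j) (ms[i := Suc m] ! j) u b"
    and "path_arc (vs ! j) (path_offset n (ms[i := Suc m]) j) (ms[i := Suc m] ! j) b u
           \<longleftrightarrow> j = i \<and> b = (if m = 0 then vs ! i else u - 1)"
proof -
  have "vs ! j < n" using vs_less j by simp
  then have v: "vs ! j < path_offset n ms j" "vs ! j < u"
    using le_path_offset[of n ms] unfolding u_def by (simp_all add: less_le_trans trans_less_add1)
  have "(\<not> path_arc (vs ! j) (path_offset n (ms[i := Suc m]) j) (ms[i := Suc m] ! j) u b) \<and>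
        (path_arc (vs ! j) (path_offset n (ms[i := Suc m]) j) (ms[i := Suc m] ! j) b u
           \<longleftrightarrow> j = i \<and> b = (if m = 0 then vs ! i else u - 1))"
  proof (cases "j = i")
    case True
    then show ?thesis using path_arc_last[OF v(1)] length_ms j
      by (simp add: path_offset_update_zero u_def)
  next
    case False
    then consider "j < i" | "i < j" by arith
    then show ?thesis
    proof cases
      case 1
      then have "path_offset n ms j + ms ! j \<le> u"
        using path_offset_add_nth_le[of j i ms n] length_ms j unfolding u_def by simp
      then show ?thesis
        using not_path_arc_outside[OF v(2)] 1 length_ms by (simp add: path_offset_update_zero)
    next
      case 2
      then have "u < path_offset n ms j + Suc m"
        using path_offset_mono[of i j n ms] unfolding u_def by simp
      then show ?thesis
        using not_path_arc_outside[OF v(2)] 2 length_ms by (simp add: path_offset_update_zero)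
    qed
  qed
  then show "\<not> path_arc (vs ! j) (path_offset n (ms[i := Suc m]) j) (ms[i := Suc m] ! j) u b"
    and "path_arc (vs ! j) (path_offset n (ms[i := Suc m]) j) (ms[i := Suc m] ! j) b u
           \<longleftrightarrow> j = i \<and> b = (if m = 0 then vs ! i else u - 1)"
    by blast+
qed

lemma attach_paths_end_vertex:
  fixes m :: nat
  defines "u \<equiv> path_offset n ms i + m"
  shows "attach_paths n E vs (ms[i := Suc m]) u b \<longleftrightarrow> b = (if m = 0 then vs ! i else u - 1)"
    and "attach_paths n E vs (ms[i := Suc m]) b u \<longleftrightarrow> b = (if m = 0 then vs ! i else u - 1)"
proof -
  have "\<not> E u b" "\<not> E b u"
    using simple le_path_offset[of n ms i] unfolding simple_graph_def u_def by fastforce+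
  then show "attach_paths n E vs (ms[i := Suc m]) u b \<longleftrightarrow> b = (if m = 0 then vs ! i else u - 1)"
    and "attach_paths n E vs (ms[i := Suc m]) b u \<longleftrightarrow> b = (if m = 0 then vs ! i else u - 1)"
    using path_arc_end_vertex[of _ m b] i_less
    unfolding attach_paths_def attach_dir_iff_path_arc u_def by auto
qed

lemma delete_vertex_attach_paths:
  "delete_vertex (path_offset n ms i + m) (attach_paths n E vs (ms[i := Suc m])) =
     attach_paths n E vs (ms[i := m])"
proof (intro ext)
  fix a b
  let ?u = "path_offset n ms i + m"
  have "n \<le> ?u" using le_path_offset[of n ms i] by simp
  then have "E (insert_index ?u a) (insert_index ?u b) \<longleftrightarrow> E a b"
    using simple unfolding simple_graph_def insert_index_def by (smt (verit) Suc_lessD le_trans less_le_not_le)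
  then show "delete_vertex ?u (attach_paths n E vs (ms[i := Suc m])) a b \<longleftrightarrow>
      attach_paths n E vs (ms[i := m]) a b"
    unfolding delete_vertex_def attach_paths_def attach_dir_iff_path_arc
    using path_arc_delete_end[of _ m a b] path_arc_delete_end[of _ m b a] by auto
qed

lemma graph_char_poly_attach_paths_Suc_Suc:
  "graph_char_poly (n + sum_list ms + Suc (Suc m)) (attach_paths n E vs (ms[i := Suc (Suc m)]))
   = [:0, 1:] * graph_char_poly (n + sum_list ms + Suc m) (attach_paths n E vs (ms[i := Suc m]))
     - graph_char_poly (n + sum_list ms + m) (attach_paths n E vs (ms[i := m]))"
proof -
  let ?u = "path_offset n ms i + Suc m" and ?p = "path_offset n ms i + m"
  have "graph_char_poly (Suc (Suc (n + sum_list ms + m))) (attach_paths n E vs (ms[i := Suc (Suc m)]))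
     = [:0, 1:] * graph_char_poly (Suc (n + sum_list ms + m))
         (delete_vertex ?u (attach_paths n E vs (ms[i := Suc (Suc m)])))
       - graph_char_poly (n + sum_list ms + m)
         (delete_vertex ?p (delete_vertex ?u (attach_paths n E vs (ms[i := Suc (Suc m)]))))"
    using path_offset_le_order attach_paths_end_vertex[of "Suc m"]
    by (intro graph_char_poly_pendant) auto
  also have "delete_vertex ?u (attach_paths n E vs (ms[i := Suc (Suc m)])) =
      attach_paths n E vs (ms[i := Suc m])"
    by (rule delete_vertex_attach_paths)
  also have "delete_vertex ?p (attach_paths n E vs (ms[i := Suc m])) = attach_paths n E vs (ms[i := m])"
    by (rule delete_vertex_attach_paths)
  finally show ?thesis by simp
qed

lemma bipartite_attach_paths_update:
  "bipartite (n + sum_list ms + x) (attach_paths n E vs (ms[i := x]))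
   \<longleftrightarrow> bipartite (n + sum_list ms) (attach_paths n E vs ms)"
proof (induction x)
  case 0
  then show ?case using ms_i by (simp add: list_update_id[of ms i, unfolded ms_i])
next
  case (Suc m)
  let ?u = "path_offset n ms i + m"
  have "vs ! i < n" using vs_less i_less by simp
  then have "bipartite (Suc (n + sum_list ms + m)) (attach_paths n E vs (ms[i := Suc m]))
     \<longleftrightarrow> bipartite (n + sum_list ms + m) (delete_vertex ?u (attach_paths n E vs (ms[i := Suc m])))"
    using path_offset_le_order le_path_offset[of n ms i] attach_paths_end_vertex[of m]
    by (intro bipartite_delete_pendant) auto
  then show ?case using Suc.IH by (simp add: delete_vertex_attach_paths)
qed

lemma recip_transform_attach_paths_interpolation:
  fixes bip :: bool and x :: nat
  defines "w \<equiv> recip_square bip"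
  defines "T \<equiv> \<lambda>ms. recip_transform (recip_weight bip) (w + 1) (n + sum_list ms)
                      (graph_char_poly (n + sum_list ms) (attach_paths n E vs ms))"
  shows "(w - 1) * T (ms[i := x]) = (w - w ^ x) * T ms + (w ^ x - 1) * T (ms[i := 1])"
proof -
  define chi where "chi x = graph_char_poly (n + sum_list ms + x) (attach_paths n E vs (ms[i := x]))"
    for x
  define G where "G x = T (ms[i := x])" for x
  have G: "G x = recip_transform (recip_weight bip) (w + 1) (n + sum_list ms + x) (chi x)" for x
    unfolding G_def T_def chi_def by (simp add: sum_list_update_zero add.assoc)
  have "G (Suc (Suc m)) = (w + 1) * G (Suc m) - w * G m" for m
  proof -
    have "chi (Suc (Suc m)) = [:0, 1:] * chi (Suc m) - chi m"
      unfolding chi_def by (rule graph_char_poly_attach_paths_Suc_Suc)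
    then have "chi (Suc (Suc m)) = pCons 0 (chi (Suc m)) - chi m"
      by (simp only: pCons_0_as_mult[of "chi (Suc m)"])
    then have "G (Suc (Suc m)) =
        recip_transform (recip_weight bip) (w + 1) (Suc (n + sum_list ms + Suc m)) (pCons 0 (chi (Suc m)))
        - recip_transform (recip_weight bip) (w + 1) (Suc (Suc (n + sum_list ms + m))) (chi m)"
      by (simp only: G recip_transform_diff add_Suc_right)
    also have "\<dots> = (w + 1) * G (Suc m) - w * G m"
      using recip_transform_Suc_Suc[where h = "recip_weight bip", OF recip_weight_Suc_Suc,
          of "chi m" "n + sum_list ms + m"]
      unfolding recip_transform_pCons_0 G w_def chi_def degree_graph_char_poly by simp
    finally show ?thesis .
  qed
  then have "(w - 1) * G x = (w - w ^ x) * G 0 + (w ^ x - 1) * G 1"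
    by (rule linear_recurrence_interpolation)
  then show ?thesis
    unfolding G_def using ms_i by (simp add: list_update_id[of ms i, unfolded ms_i])
qed

end

lemma bipartite_attach_paths_eq_base:
  assumes "simple_graph n E" "\<forall>v\<in>set vs. v < n"
  shows "length ms = length vs \<Longrightarrow> bipartite (n + sum_list ms) (attach_paths n E vs ms)
     \<longleftrightarrow> bipartite n (attach_paths n E vs (replicate (length vs) 0))"
proof (induction "sum_list ms" arbitrary: ms rule: less_induct)
  case less
  show ?case
  proof (cases "\<forall>j < length vs. ms ! j = 0")
    case True
    then have "ms = replicate (length vs) 0" using less.prems by (simp add: list_eq_iff_nth_eq)
    then show ?thesis by (simp add: sum_list_replicate)
  next
    case False
    then obtain i where i: "i < length vs" and "ms ! i \<noteq> 0" by blast
    let ?ms0 = "ms[i := 0]"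
    have "?ms0[i := ms ! i] = ms" by simp
    moreover note bipartite_attach_paths_update[OF assms, of ?ms0 i "ms ! i"]
      sum_list_update_zero[OF assms, of ?ms0 i "ms ! i"]
    ultimately have "bipartite (n + sum_list ms) (attach_paths n E vs ms)
        \<longleftrightarrow> bipartite (n + sum_list ?ms0) (attach_paths n E vs ?ms0)"
        and "sum_list ?ms0 < sum_list ms"
      using i less.prems \<open>ms ! i \<noteq> 0\<close> by (simp_all add: add.assoc)
    then show ?thesis using less.hyps less.prems by simp
  qed
qed

theorem lemma11:
  fixes n :: nat and E :: "nat \<Rightarrow> nat \<Rightarrow> bool" and vs :: "nat list"
  assumes "simple_graph n E"
    and "\<forall>v \<in> set vs. v < n"
  shows "\<exists>P :: nat list \<Rightarrow> int poly.
    \<forall>ms :: nat list. length ms = length vs \<and> (\<forall>m \<in> set ms. 2 \<le> m) \<longrightarrow>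
      (let N = n + sum_list ms;
           E' = attach_paths n E vs ms;
           y2 = (if bipartite N E' then [:0, 1:] else [:0, 0, 1:] :: int poly)
       in (y2 - 1) ^ length vs * reciprocal_poly N E' =
          (\<Sum>eps \<in> {eps. length eps = length vs \<and> set eps \<subseteq> {0, 1}}.
              y2 ^ (\<Sum>i < length vs. eps ! i * ms ! i) * P eps))"
proof -
  define bip where "bip = bipartite n (attach_paths n E vs (replicate (length vs) 0))"
  define w where "w = recip_square bip"
  define T where "T ms = recip_transform (recip_weight bip) (w + 1) (n + sum_list ms)
    (graph_char_poly (n + sum_list ms) (attach_paths n E vs ms))" for ms
  have "(w - 1) * T ms = (w - w ^ (ms ! i)) * T (ms[i := 0]) + (w ^ (ms ! i) - 1) * T (ms[i := 1])"
    if "length ms = length vs" "i < length vs" for ms i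
    using recip_transform_attach_paths_interpolation[OF assms, of "ms[i := 0]" i bip "ms ! i"] that
    by (simp add: T_def w_def)
  then obtain P where P: "\<And>ms. length ms = length vs \<Longrightarrow> (w - 1) ^ length vs * T ms =
      (\<Sum>eps\<in>binary_lists (length vs). w ^ (\<Sum>i<length vs. eps ! i * ms ! i) * P eps)"
    using coordinatewise_interpolation_expansion[of "length vs" w T] by blast
  have "bipartite (n + sum_list ms) (attach_paths n E vs ms) = bip" if "length ms = length vs" for ms
    using bipartite_attach_paths_eq_base[OF assms that] unfolding bip_def .
  then have "reciprocal_poly (n + sum_list ms) (attach_paths n E vs ms) = T ms"
    and "(if bipartite (n + sum_list ms) (attach_paths n E vs ms) then [:0, 1:] else [:0, 0, 1:]) = w"
    if "length ms = length vs" for ms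
    using that unfolding T_def w_def by (simp_all add: reciprocal_poly_eq_recip_transform recip_square_def)
  then show ?thesis
    using P unfolding Let_def binary_lists_def by (intro exI[of _ P]) simp
qed

end
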